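(* Let $\alpha,\lambda>0$ and $\beta_1,\beta_2,\beta_3>0$. Let $W_1,W_2,W_3$ be independent continuous random variables with $P(W_i\le w)=(1-e^{-\lambda w^{\alpha}})^{\beta_i}$ for $w>0$, and let $(Z_1,Z_2)=(\max\{W_1,W_3\},\max\{W_2,W_3\})$ (the bivariate continuous exponentiated Weibull distribution with parameters $\alpha,\lambda,\beta_1,\beta_2,\beta_3$). Set $X_i=[Z_i]$, $i=1,2$, where $[z]$ is the largest integer $\le z$, and $p=e^{-\lambda}$. Then $(X_1,X_2)\sim BDEW(\alpha,p,\beta_1,\beta_2,\beta_3)$.
   Context: The exponentiated discrete Weibull distribution $EDW(\alpha,p,\beta)$ ($\alpha,\beta>0$, $0<p<1$) is the distribution on $\mathbb{N}_0=\{0,1,2,\dots\}$ with cumulative distribution function $F_{EDW}(x;\alpha,p,\beta)=[1-p^{([x]+1)^{\alpha}}]^{\beta}$ for real $x\ge 0$. The bivariate discrete exponentiated Weibull distribution $BDEW(\alpha,p,\beta_1,\beta_2,\beta_3)$ is the distribution of $(\max\{V_1,V_3\},\max\{V_2,V_3\})$ where $V_1,V_2,V_3$ are independent with $V_i\sim EDW(\alpha,p,\beta_i)$; equivalently it has joint CDF $F(x_1,x_2)=[1-p^{(x_1+1)^{\alpha}}]^{\beta_1}[1-p^{(x_2+1)^{\alpha}}]^{\beta_2}[1-p^{(\min\{x_1,x_2\}+1)^{\alpha}}]^{\beta_3}$ for $x_1,x_2\in\mathbb{N}_0$. *)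

theory Defs
  imports "HOL-Probability.Probability"
begin

definition bdew_cdf :: "real \<Rightarrow> real \<Rightarrow> real \<Rightarrow> real \<Rightarrow> real \<Rightarrow> nat \<Rightarrow> nat \<Rightarrow> real" where
  "bdew_cdf \<alpha> p \<beta>1 \<beta>2 \<beta>3 x1 x2 =
     (1 - p powr (real (x1 + 1) powr \<alpha>)) powr \<beta>1 *
     (1 - p powr (real (x2 + 1) powr \<alpha>)) powr \<beta>2 *
     (1 - p powr (real (min x1 x2 + 1) powr \<alpha>)) powr \<beta>3"

text \<open>The pair (X1, X2) of integer-valued random variables on M has the BDEW
  distribution: it is almost surely N0 x N0-valued and its joint CDF on N0 x N0
  (which determines a distribution on N0 x N0) is the BDEW joint CDF.\<close>
definition has_BDEW_distribution ::
  "'a measure \<Rightarrow> ('a \<Rightarrow> int) \<Rightarrow> ('a \<Rightarrow> int) \<Rightarrow> real \<Rightarrow> real \<Rightarrow> real \<Rightarrow> real \<Rightarrow> real \<Rightarrow> bool" where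
  "has_BDEW_distribution M X1 X2 \<alpha> p \<beta>1 \<beta>2 \<beta>3 \<longleftrightarrow>
     X1 \<in> measurable M (count_space UNIV) \<and> X2 \<in> measurable M (count_space UNIV) \<and>
     (AE \<omega> in M. 0 \<le> X1 \<omega> \<and> 0 \<le> X2 \<omega>) \<and>
     (\<forall>x1 x2 :: nat. measure M {\<omega> \<in> space M. X1 \<omega> \<le> int x1 \<and> X2 \<omega> \<le> int x2}
                      = bdew_cdf \<alpha> p \<beta>1 \<beta>2 \<beta>3 x1 x2)"

end

theory Submission
  imports Defs
begin

text \<open>The event \<open>\<lfloor>max W1 W3\<rfloor> \<le> x1 \<and> \<lfloor>max W2 W3\<rfloor> \<le> x2\<close> equals
  \<open>W1 < x1 + 1 \<and> W2 < x2 + 1 \<and> W3 < min x1 x2 + 1\<close>, so by independence its probability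
  is a product of the probabilities \<open>P(Wi < a)\<close>. The exponentiated Weibull CDF \<open>F\<close> is
  continuous, hence \<open>P(Wi < a) = F a\<close>, and with \<open>p = exp (- \<lambda>)\<close> the value \<open>F (n + 1)\<close> is
  the discrete factor \<open>(1 - p powr ((n + 1) powr \<alpha>)) powr \<beta>\<close>. As \<open>F\<close> tends to \<open>0\<close> at \<open>0\<^sup>+\<close>,
  \<open>W3 > 0\<close> almost surely, so both floors are nonnegative.\<close>

definition exp_weibull_cdf :: "real \<Rightarrow> real \<Rightarrow> real \<Rightarrow> real \<Rightarrow> real" where
  "exp_weibull_cdf lam \<alpha> \<beta> w = (1 - exp (- lam * w powr \<alpha>)) powr \<beta>"

lemma isCont_exp_weibull_cdf:
  fixes lam \<alpha> \<beta> a :: real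
  assumes "lam > 0" and "a > 0"
  shows "isCont (exp_weibull_cdf lam \<alpha> \<beta>) a"
proof -
  have "exp (- lam * a powr \<alpha>) < 1"
    using assms by simp
  then show ?thesis
    unfolding exp_weibull_cdf_def using assms by (intro continuous_intros) auto
qed

lemma exp_weibull_cdf_tendsto_0:
  fixes lam \<alpha> \<beta> :: real
  assumes "lam \<ge> 0" and "\<alpha> > 0" and "\<beta> > 0"
  shows "(exp_weibull_cdf lam \<alpha> \<beta> \<longlongrightarrow> 0) (at_right 0)"
  unfolding exp_weibull_cdf_def
proof (rule tendsto_zero_powrI)
  have "((\<lambda>w. w powr \<alpha>) \<longlongrightarrow> 0) (at_right 0)"
    using \<open>\<alpha> > 0\<close> by (intro tendsto_zero_powrI tendsto_ident_at eventually_at_rightI[of 0 1]) auto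
  then have "((\<lambda>w. 1 - exp (- lam * w powr \<alpha>)) \<longlongrightarrow> 1 - exp (- lam * 0)) (at_right 0)"
    by (intro tendsto_intros)
  then show "((\<lambda>w. 1 - exp (- lam * w powr \<alpha>)) \<longlongrightarrow> 0) (at_right 0)"
    by simp
  show "\<forall>\<^sub>F w in at_right 0. 0 \<le> 1 - exp (- lam * w powr \<alpha>)"
    using \<open>lam \<ge> 0\<close> by (intro always_eventually) auto
qed (use \<open>\<beta> > 0\<close> in auto)

lemma exp_weibull_cdf_eq_discrete:
  "exp_weibull_cdf lam \<alpha> \<beta> w = (1 - exp (- lam) powr (w powr \<alpha>)) powr \<beta>"
  by (simp add: exp_weibull_cdf_def powr_def mult.commute)

lemma (in finite_measure) measure_le_eq_0_if_cdf_tendsto_0: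
  fixes X :: "'a \<Rightarrow> real"
  assumes "X \<in> borel_measurable M"
    and cdf: "\<forall>w>c. measure M {\<omega> \<in> space M. X \<omega> \<le> w} = F w"
    and "(F \<longlongrightarrow> 0) (at_right c)"
  shows "measure M {\<omega> \<in> space M. X \<omega> \<le> c} = 0"
proof (rule antisym)
  have "measure M {\<omega> \<in> space M. X \<omega> \<le> c} \<le> measure M {\<omega> \<in> space M. X \<omega> \<le> w}"
    if "w > c" for w
    using that \<open>X \<in> borel_measurable M\<close> by (intro finite_measure_mono) auto
  then show "measure M {\<omega> \<in> space M. X \<omega> \<le> c} \<le> 0"
    using cdf by (intro tendsto_lowerbound[OF \<open>(F \<longlongrightarrow> 0) (at_right c)\<close>]
        eventually_at_rightI[of c "c + 1"]) auto
qed simp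

lemma (in finite_measure) measure_less_eq_cdf_if_left_continuous:
  fixes X :: "'a \<Rightarrow> real"
  assumes "X \<in> borel_measurable M"
    and cdf: "\<forall>w>c. measure M {\<omega> \<in> space M. X \<omega> \<le> w} = F w"
    and "c < a" and "continuous (at_left a) F"
  shows "measure M {\<omega> \<in> space M. X \<omega> < a} = F a"
proof (rule antisym)
  have "measure M {\<omega> \<in> space M. X \<omega> < a} \<le> measure M {\<omega> \<in> space M. X \<omega> \<le> a}"
    using \<open>X \<in> borel_measurable M\<close> by (intro finite_measure_mono) auto
  then show "measure M {\<omega> \<in> space M. X \<omega> < a} \<le> F a"
    using cdf \<open>c < a\<close> by simp
  have "measure M {\<omega> \<in> space M. X \<omega> \<le> w} \<le> measure M {\<omega> \<in> space M. X \<omega> < a}"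
    if "w < a" for w
    using that \<open>X \<in> borel_measurable M\<close> by (intro finite_measure_mono) auto
  then have "\<forall>\<^sub>F w in at_left a. F w \<le> measure M {\<omega> \<in> space M. X \<omega> < a}"
    using cdf \<open>c < a\<close> by (intro eventually_at_leftI[of c a]) force+
  moreover have "(F \<longlongrightarrow> F a) (at_left a)"
    using \<open>continuous (at_left a) F\<close> by (simp add: continuous_within)
  ultimately show "F a \<le> measure M {\<omega> \<in> space M. X \<omega> < a}"
    by (intro tendsto_upperbound) auto
qed

lemma floor_max_le_iff: "\<lfloor>max x y\<rfloor> \<le> z \<longleftrightarrow> x < of_int z + 1 \<and> y < of_int z + 1"
  by (auto simp: floor_le_iff)

lemma (in prob_space) prob_floor_max_le:
  fixes W :: "nat \<Rightarrow> 'a \<Rightarrow> real"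
  assumes "indep_vars (\<lambda>_. borel) W {1, 2, 3}"
  shows "prob {\<omega> \<in> space M. \<lfloor>max (W 1 \<omega>) (W 3 \<omega>)\<rfloor> \<le> int x1 \<and> \<lfloor>max (W 2 \<omega>) (W 3 \<omega>)\<rfloor> \<le> int x2}
    = prob {\<omega> \<in> space M. W 1 \<omega> < real (x1 + 1)} * prob {\<omega> \<in> space M. W 2 \<omega> < real (x2 + 1)}
      * prob {\<omega> \<in> space M. W 3 \<omega> < real (min x1 x2 + 1)}"
proof -
  define a :: "nat \<Rightarrow> real" where
    "a = (\<lambda>j. if j = 1 then real (x1 + 1) else if j = 2 then real (x2 + 1) else real (min x1 x2 + 1))"
  have "{\<omega> \<in> space M. \<lfloor>max (W 1 \<omega>) (W 3 \<omega>)\<rfloor> \<le> int x1 \<and> \<lfloor>max (W 2 \<omega>) (W 3 \<omega>)\<rfloor> \<le> int x2}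
      = (\<Inter>j\<in>{1, 2, 3}. W j -` {..<a j} \<inter> space M)"
    by (auto simp: floor_max_le_iff a_def min_def)
  also have "prob \<dots> = (\<Prod>j\<in>{1, 2, 3}. prob (W j -` {..<a j} \<inter> space M))"
    using assms by (intro indep_varsD_finite) auto
  finally show ?thesis
    by (simp add: a_def vimage_def Int_def conj_commute)
qed

theorem mainTheorem3:
  fixes M :: "'a measure" and W :: "nat \<Rightarrow> 'a \<Rightarrow> real" and \<beta> :: "nat \<Rightarrow> real"
    and \<alpha> lam :: real
  assumes "prob_space M"
    and "\<alpha> > 0" and "lam > 0" and "\<forall>i\<in>{1,2,3}. \<beta> i > 0"
    and "prob_space.indep_vars M (\<lambda>_. borel) W {1,2,3}"
    and "\<forall>i\<in>{1,2,3}. \<forall>w>0. measure M {\<omega> \<in> space M. W i \<omega> \<le> w}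
                               = (1 - exp (- lam * w powr \<alpha>)) powr \<beta> i"
  shows "has_BDEW_distribution M
           (\<lambda>\<omega>. \<lfloor>max (W 1 \<omega>) (W 3 \<omega>)\<rfloor>) (\<lambda>\<omega>. \<lfloor>max (W 2 \<omega>) (W 3 \<omega>)\<rfloor>)
           \<alpha> (exp (- lam)) (\<beta> 1) (\<beta> 2) (\<beta> 3)"
proof -
  interpret prob_space M by fact
  have indep: "indep_vars (\<lambda>_. borel) W {1, 2, 3}"
    using assms(5) by simp
  have [measurable]: "W i \<in> borel_measurable M" if "i \<in> {1, 2, 3}" for i
    using indep that by (auto simp: indep_vars_def)
  have cdf: "\<forall>w>0. measure M {\<omega> \<in> space M. W i \<omega> \<le> w} = exp_weibull_cdf lam \<alpha> (\<beta> i) w"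
    if "i \<in> {1, 2, 3}" for i
    using assms(6) that unfolding exp_weibull_cdf_def by blast
  have less: "prob {\<omega> \<in> space M. W i \<omega> < a} = exp_weibull_cdf lam \<alpha> (\<beta> i) a"
    if "i \<in> {1, 2, 3}" and "a > 0" for i a
    using isCont_exp_weibull_cdf[OF \<open>lam > 0\<close> \<open>a > 0\<close>] that
    by (intro measure_less_eq_cdf_if_left_continuous[OF _ cdf]) (auto simp: continuous_at_split)
  have "prob {\<omega> \<in> space M. W 3 \<omega> \<le> 0} = 0"
    using assms(2-4) by (intro measure_le_eq_0_if_cdf_tendsto_0[OF _ cdf] exp_weibull_cdf_tendsto_0) auto
  then have "AE \<omega> in M. 0 < W 3 \<omega>"
    by (intro AE_I[of _ _ "{\<omega> \<in> space M. W 3 \<omega> \<le> 0}"]) (auto simp: emeasure_eq_measure)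
  then have "AE \<omega> in M. 0 \<le> \<lfloor>max (W 1 \<omega>) (W 3 \<omega>)\<rfloor> \<and> 0 \<le> \<lfloor>max (W 2 \<omega>) (W 3 \<omega>)\<rfloor>"
    by eventually_elim auto
  moreover have "prob {\<omega> \<in> space M. \<lfloor>max (W 1 \<omega>) (W 3 \<omega>)\<rfloor> \<le> int x1 \<and> \<lfloor>max (W 2 \<omega>) (W 3 \<omega>)\<rfloor> \<le> int x2}
      = bdew_cdf \<alpha> (exp (- lam)) (\<beta> 1) (\<beta> 2) (\<beta> 3) x1 x2" for x1 x2
    unfolding prob_floor_max_le[OF indep] bdew_cdf_def
    by (simp add: less exp_weibull_cdf_eq_discrete)
  ultimately show ?thesis
    unfolding has_BDEW_distribution_def by simp
qed

end
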